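(* $\mathcal{R}(\mathtt{KB})>1.4334$: there exist MWSBP instances (with $w_i=s_i$ for all items) and corresponding outputs of the Knapsack-Batching algorithm whose cost exceeds $1.4334\cdot\mathtt{OPT}$.
   Context: Min-Weighted Sum Bin Packing (MWSBP): an instance consists of $n$ items with sizes $s_i\in(0,1]$ and weights $w_i>0$. A feasible solution is a partition of the items into bins $B_1,\ldots,B_p$ with $\sum_{i\in B_k}s_i\le 1$; its cost is $\sum_{k=1}^p k\sum_{i\in B_k}w_i$; $\mathtt{OPT}$ is the minimum cost. The Knapsack-Batching algorithm ($\mathtt{KB}$): for $k=1,2,\ldots$ while items remain, let $B_k$ be a subset of the remaining items of maximum total weight subject to total size at most $1$ (ties broken arbitrarily). The approximation ratio $\mathcal{R}(\mathtt{ALG})$ is the smallest $\rho\ge1$ such that on every instance (and for every way the algorithm may break ties) the cost of its output is at most $\rho\cdot\mathtt{OPT}$. *)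

theory Defs
  imports Main "HOL-Library.Multiset" Complex_Main
begin

text \<open>Items are natural numbers from a finite set I; s = sizes, w = weights.
  A solution is a list of bins (bin k+1 is the k-th list entry, 0-based).\<close>

definition mwsbp_instance :: "nat set \<Rightarrow> (nat \<Rightarrow> real) \<Rightarrow> (nat \<Rightarrow> real) \<Rightarrow> bool" where
  "mwsbp_instance I s w \<longleftrightarrow> finite I \<and> (\<forall>i\<in>I. 0 < s i \<and> s i \<le> 1 \<and> 0 < w i)"

definition feasible :: "nat set \<Rightarrow> (nat \<Rightarrow> real) \<Rightarrow> nat set list \<Rightarrow> bool" where
  "feasible I s Bs \<longleftrightarrow>
     (\<Union>(set Bs) = I) \<and>
     (\<forall>k<length Bs. Bs ! k \<noteq> {} \<and> Bs ! k \<subseteq> I \<and> sum s (Bs ! k) \<le> 1) \<and>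
     (\<forall>j<length Bs. \<forall>k<length Bs. j \<noteq> k \<longrightarrow> Bs ! j \<inter> Bs ! k = {})"

definition cost :: "(nat \<Rightarrow> real) \<Rightarrow> nat set list \<Rightarrow> real" where
  "cost w Bs = (\<Sum>k<length Bs. real (k + 1) * sum w (Bs ! k))"

definition OPT :: "nat set \<Rightarrow> (nat \<Rightarrow> real) \<Rightarrow> (nat \<Rightarrow> real) \<Rightarrow> real" where
  "OPT I s w = Inf {cost w Bs | Bs. feasible I s Bs}"

text \<open>Bs is a possible output of Knapsack-Batching (with some tie-breaking):
  while items remain, the next bin is a maximum-weight subset of the remaining
  items of total size at most 1; the run stops when all items are packed.\<close>

definition KB_output :: "nat set \<Rightarrow> (nat \<Rightarrow> real) \<Rightarrow> (nat \<Rightarrow> real) \<Rightarrow> nat set list \<Rightarrow> bool" where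
  "KB_output I s w Bs \<longleftrightarrow>
     (\<Union>(set Bs) = I) \<and>
     (\<forall>k<length Bs.
        (let R = I - \<Union>(set (take k Bs)) in
           R \<noteq> {} \<and> Bs ! k \<subseteq> R \<and> sum s (Bs ! k) \<le> 1 \<and>
           (\<forall>B. B \<subseteq> R \<and> sum s B \<le> 1 \<longrightarrow> sum w B \<le> sum w (Bs ! k))))"

end

theory Submission
  imports Defs "HOL-Library.Nat_Bijection"
begin

text \<open>Take items in classes \<open>i = 1..m\<close>, where \<open>N i\<close> items of class \<open>i\<close> have size (= weight)
  \<open>2^(m+1-i) / (2^(m+1) - 2)\<close>, so one item of each class fills a bin exactly, and
  packing the \<open>t\<close>-th items of all classes together in bin \<open>t\<close> is feasible. Knapsack-Batching
  may break ties by first packing the smallest items, \<open>2^m - 1\<close> of class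
  \<open>m\<close> per bin. Once the classes above \<open>i\<close> are packed, all remaining sizes are
  multiples of the size of class \<open>i\<close>, so no
  bin can hold more than \<open>2^i - 1\<close> such units, which \<open>2^i - 1\<close> items of class \<open>i\<close> achieve.
  The large, heavy items are thus pushed to late bins. For \<open>m = 18\<close> and suitable counts
  \<open>N i\<close> (multiples of \<open>2^i - 1\<close>) both costs have closed forms whose ratio exceeds 1.4334.\<close>

definition ranked_bins :: "(nat \<Rightarrow> nat) \<Rightarrow> nat set \<Rightarrow> nat \<Rightarrow> nat set list" where
  "ranked_bins f A L = map (\<lambda>k. {x\<in>A. f x = k}) [0..<L]"

lemma union_take_ranked_bins:
  assumes "k \<le> L"
  shows "\<Union>(set (take k (ranked_bins f A L))) = {x\<in>A. f x < k}"
  using assms by (auto simp: ranked_bins_def take_map)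

lemma cost_ranked_bins:
  assumes "finite A" and "\<forall>x\<in>A. f x < L"
  shows "cost w (ranked_bins f A L) = (\<Sum>x\<in>A. real (f x + 1) * w x)"
proof -
  have "cost w (ranked_bins f A L) = (\<Sum>k<L. \<Sum>x\<in>{x\<in>A. f x = k}. real (f x + 1) * w x)"
    by (simp add: cost_def ranked_bins_def sum_distrib_left)
  also have "\<dots> = (\<Sum>x\<in>A. real (f x + 1) * w x)"
    by (rule sum.group) (use assms in auto)
  finally show ?thesis .
qed

lemma feasible_ranked_bins:
  assumes "\<forall>x\<in>A. f x < L"
    and "\<And>k. k < L \<Longrightarrow> {x\<in>A. f x = k} \<noteq> {} \<and> sum s {x\<in>A. f x = k} \<le> 1"
  shows "feasible A s (ranked_bins f A L)"
  using assms by (auto simp: feasible_def ranked_bins_def)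

lemma KB_output_ranked_bins:
  assumes "\<forall>x\<in>A. f x < L"
    and "\<And>k. k < L \<Longrightarrow> {x\<in>A. f x = k} \<noteq> {} \<and> sum s {x\<in>A. f x = k} \<le> 1"
    and "\<And>k B. k < L \<Longrightarrow> B \<subseteq> {x\<in>A. k \<le> f x} \<Longrightarrow> sum s B \<le> 1
           \<Longrightarrow> sum w B \<le> sum w {x\<in>A. f x = k}"
  shows "KB_output A s w (ranked_bins f A L)"
proof -
  have "A - \<Union>(set (take k (ranked_bins f A L))) = {x\<in>A. k \<le> f x}" if "k < L" for k
    using union_take_ranked_bins[of k L f A] that by auto
  then show ?thesis
    using assms unfolding KB_output_def Let_def
    by (auto simp: ranked_bins_def) (metis order_refl)
qed

lemma OPT_le_cost:
  assumes "\<forall>i\<in>I. 0 \<le> w i" and "feasible I s Bs"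
  shows "OPT I s w \<le> cost w Bs"
  unfolding OPT_def
proof (rule cInf_lower)
  show "cost w Bs \<in> {cost w Bs |Bs. feasible I s Bs}"
    using assms(2) by blast
  have "0 \<le> cost w Bs'" if "feasible I s Bs'" for Bs'
  proof -
    have "0 \<le> sum w (Bs' ! k)" if "k < length Bs'" for k
      using that \<open>feasible I s Bs'\<close> assms(1) unfolding feasible_def
      by (intro sum_nonneg) blast
    then show ?thesis unfolding cost_def by (intro sum_nonneg) simp
  qed
  then show "bdd_below {cost w Bs |Bs. feasible I s Bs}"
    by (auto intro: bdd_belowI[of _ 0])
qed

lemma sum_div_upto_mult:
  fixes q n :: nat
  assumes "0 < q"
  shows "(\<Sum>j<n * q. j div q) = q * (n * (n - 1) div 2)"
proof -
  have "(\<Sum>j<n * q. j div q) = (\<Sum>k<n. \<Sum>j\<in>{k * q..<k * q + q}. j div q)"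
    by (rule sum.nat_group[symmetric])
  also have "\<dots> = (\<Sum>k<n. q * k)"
  proof (rule sum.cong[OF refl])
    fix k
    have "j div q = k" if "j \<in> {k * q..<k * q + q}" for j
      using that assms by (auto intro: div_nat_eqI simp: mult.commute)
    then show "(\<Sum>j\<in>{k * q..<k * q + q}. j div q) = q * k"
      by simp
  qed
  also have "\<dots> = q * (n * (n - 1) div 2)"
    by (simp add: sum_distrib_left[symmetric] atLeast0LessThan[symmetric] Sum_Ico_nat)
  finally show ?thesis .
qed

lemma sum_Suc_mult_lessThan:
  fixes n u :: nat
  shows "(\<Sum>j<n. (j + 1) * u) = u * (n * (n + 1) div 2)"
proof -
  have "(\<Sum>j<n. j + 1) = (\<Sum>j<Suc n. j)"
    by (simp only: sum.lessThan_Suc_shift) simp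
  also have "\<dots> = n * (n + 1) div 2"
    by (simp add: atLeast0LessThan[symmetric] Sum_Ico_nat mult.commute)
  finally show ?thesis by (metis mult.commute sum_distrib_right)
qed

lemma le_mult_pred_if_dvd_less:
  fixes a d n :: nat
  assumes "d dvd a" and "a < d * n"
  shows "a \<le> d * (n - 1)"
proof -
  obtain t where "a = d * t" using assms(1) by blast
  then have "t \<le> n - 1" using assms(2) by (cases "d = 0") auto
  then show ?thesis using \<open>a = d * t\<close> by simp
qed

lemma sum_reversed_powers_of_two:
  "(\<Sum>i\<in>{1..m}. (2::nat) ^ (m + 1 - i)) = 2 ^ (m + 1) - 2"
proof -
  have "(\<Sum>i\<in>{1..m}. (2::nat) ^ (m + 1 - i)) = (\<Sum>i\<in>{0..<m}. 2 ^ (i + 1))"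
    by (subst sum.atLeastLessThan_rev_at_least_Suc_atMost)
      (rule sum.cong, auto simp: Suc_diff_le)
  also have "\<dots> = 2 * (2 ^ m - 1)"
    by (simp add: sum_distrib_left[symmetric] sum_power2)
  finally show ?thesis by simp
qed

locale geometric_classes =
  fixes m :: nat and N :: "nat \<Rightarrow> nat"
  assumes classes_nonempty: "1 \<le> m"
    and batch_dvd_count: "\<And>i. i \<in> {1..m} \<Longrightarrow> 2 ^ i - 1 dvd N i"
begin

definition scaled_size :: "nat \<Rightarrow> nat" where "scaled_size i = 2 ^ (m + 1 - i)"
definition capacity :: nat where "capacity = 2 ^ (m + 1) - 2"
definition batch :: "nat \<Rightarrow> nat" where "batch i = 2 ^ i - 1"
definition batches :: "nat \<Rightarrow> nat" where "batches i = N i div batch i"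
definition first_bin :: "nat \<Rightarrow> nat" where "first_bin i = (\<Sum>l\<in>{i<..m}. batches l)"

definition items :: "nat set" where "items = prod_encode ` (SIGMA i:{1..m}. {..<N i})"
definition item_class :: "nat \<Rightarrow> nat" where "item_class x = fst (prod_decode x)"
definition item_index :: "nat \<Rightarrow> nat" where "item_index x = snd (prod_decode x)"
definition item_size :: "nat \<Rightarrow> real" where
  "item_size x = real (scaled_size (item_class x)) / real capacity"

text \<open>Knapsack-Batching serves the classes from \<open>m\<close> down to \<open>1\<close>: the items of class \<open>i\<close>
  occupy bins \<open>first_bin i, \<dots>, first_bin (i - 1) - 1\<close>, \<open>batch i\<close> of them per bin.\<close>

definition kb_rank :: "nat \<Rightarrow> nat" where
  "kb_rank x = first_bin (item_class x) + item_index x div batch (item_class x)"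
definition kb_bins :: "nat set list" where "kb_bins = ranked_bins kb_rank items (first_bin 0)"
definition column_bins :: "nat set list" where
  "column_bins = ranked_bins item_index items (Max (N ` {1..m}))"

lemma capacity_eq_sum_scaled_size: "capacity = (\<Sum>i\<in>{1..m}. scaled_size i)"
  unfolding capacity_def scaled_size_def by (rule sum_reversed_powers_of_two[symmetric])

lemma scaled_size_ge_2: "i \<le> m \<Longrightarrow> 2 \<le> scaled_size i"
  using power_increasing[of 1 "m + 1 - i" "2::nat"] by (simp add: scaled_size_def)

lemma scaled_size_mult_power: "i \<le> m \<Longrightarrow> scaled_size i * 2 ^ i = 2 ^ (m + 1)"
  by (simp add: scaled_size_def flip: power_add)

lemma capacity_less_scaled_size_mult: "i \<le> m \<Longrightarrow> capacity < scaled_size i * 2 ^ i"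
  using scaled_size_mult_power[of i] by (simp add: capacity_def)

lemma capacity_pos: "0 < capacity"
  using one_less_power[of "2::nat" m] classes_nonempty by (simp add: capacity_def)

lemma batch_pos: "1 \<le> i \<Longrightarrow> 0 < batch i"
  using one_less_power[of "2::nat" i] by (simp add: batch_def)

lemma batch_mult_scaled_size_le_capacity:
  assumes "i \<le> m"
  shows "batch i * scaled_size i \<le> capacity"
proof -
  have "batch i * scaled_size i = 2 ^ (m + 1) - scaled_size i"
    using scaled_size_mult_power[OF assms]
    by (simp add: batch_def right_diff_distrib' mult.commute)
  then show ?thesis using scaled_size_ge_2[OF assms] by (simp add: capacity_def)
qed

lemma scaled_size_dvd_scaled_size: "c \<le> i \<Longrightarrow> scaled_size i dvd scaled_size c"
  by (simp add: scaled_size_def le_imp_power_dvd)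

lemma count_eq_batches_mult: "i \<in> {1..m} \<Longrightarrow> N i = batches i * batch i"
  using batch_dvd_count by (simp add: batches_def batch_def)

lemma items_finite: "finite items"
  by (simp add: items_def)

lemma mem_items_iff:
  "x \<in> items \<longleftrightarrow> item_class x \<in> {1..m} \<and> item_index x < N (item_class x)"
proof -
  have "x \<in> items \<longleftrightarrow> prod_decode x \<in> (SIGMA i:{1..m}. {..<N i})"
    unfolding items_def by (metis image_iff prod_decode_inverse prod_encode_inverse)
  then show ?thesis by (cases "prod_decode x") (simp add: item_class_def item_index_def)
qed

lemma item_class_encode [simp]: "item_class (prod_encode p) = fst p"
  and item_index_encode [simp]: "item_index (prod_encode p) = snd p"
  by (simp_all add: item_class_def item_index_def)

lemma sum_items:
  "(\<Sum>x\<in>items. h x) = (\<Sum>i\<in>{1..m}. \<Sum>j<N i. h (prod_encode (i, j)))"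
proof -
  have "(\<Sum>x\<in>items. h x) = (\<Sum>(i, j)\<in>(SIGMA i:{1..m}. {..<N i}). h (prod_encode (i, j)))"
    unfolding items_def by (simp add: sum.reindex[OF inj_prod_encode] split_def)
  also have "\<dots> = (\<Sum>i\<in>{1..m}. \<Sum>j<N i. h (prod_encode (i, j)))"
    by (rule sum.Sigma[symmetric]) auto
  finally show ?thesis .
qed

lemma sum_item_size: "sum item_size B = real (\<Sum>x\<in>B. scaled_size (item_class x)) / real capacity"
  by (simp add: item_size_def sum_divide_distrib)

lemma mwsbp_instance: "mwsbp_instance items item_size item_size"
  unfolding mwsbp_instance_def
proof (intro conjI ballI items_finite)
  fix x assume "x \<in> items"
  then have "item_class x \<in> {1..m}" by (simp add: mem_items_iff)
  then have "scaled_size (item_class x) \<le> batch (item_class x) * scaled_size (item_class x)"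
    using batch_pos[of "item_class x"] by simp
  also have "\<dots> \<le> capacity"
    using \<open>item_class x \<in> {1..m}\<close> by (simp add: batch_mult_scaled_size_le_capacity)
  finally have "scaled_size (item_class x) \<le> capacity" .
  then show "0 < item_size x" "item_size x \<le> 1" "0 < item_size x"
    using capacity_pos by (auto simp: item_size_def scaled_size_def)
qed

lemma first_bin_antimono: "i \<le> j \<Longrightarrow> first_bin j \<le> first_bin i"
  unfolding first_bin_def by (rule sum_mono2) auto

lemma first_bin_pred: "i \<in> {1..m} \<Longrightarrow> first_bin (i - 1) = first_bin i + batches i"
proof -
  assume "i \<in> {1..m}"
  then have "{i - 1<..m} = insert i {i<..m}" by auto
  then show ?thesis by (simp add: first_bin_def)
qed

lemma kb_rank_bounds:
  assumes "x \<in> items"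
  shows "first_bin (item_class x) \<le> kb_rank x" and "kb_rank x < first_bin (item_class x - 1)"
proof -
  have c: "item_class x \<in> {1..m}"
    and "item_index x < batches (item_class x) * batch (item_class x)"
    using assms count_eq_batches_mult by (auto simp: mem_items_iff)
  then have "item_index x div batch (item_class x) < batches (item_class x)"
    by (simp add: less_mult_imp_div_less)
  then show "kb_rank x < first_bin (item_class x - 1)"
    using first_bin_pred[OF c] by (simp add: kb_rank_def)
qed (simp add: kb_rank_def)

lemma kb_rank_less: "x \<in> items \<Longrightarrow> kb_rank x < first_bin 0"
  using kb_rank_bounds(2) first_bin_antimono[of 0] by (meson le0 order_less_le_trans)

lemma kb_phase:
  assumes "k < first_bin 0"
  obtains i where "i \<in> {1..m}" "first_bin i \<le> k" "k < first_bin (i - 1)"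
proof -
  define i where "i = (LEAST i. first_bin i \<le> k)"
  have "first_bin m \<le> k" by (simp add: first_bin_def)
  then have "first_bin i \<le> k" "i \<le> m"
    unfolding i_def by (auto intro: LeastI Least_le)
  moreover have "i \<noteq> 0" using assms \<open>first_bin i \<le> k\<close> by (intro notI) simp
  moreover have "k < first_bin (i - 1)"
    using not_less_Least[of "i - 1" "\<lambda>i. first_bin i \<le> k"] \<open>i \<noteq> 0\<close>
    unfolding i_def by fastforce
  ultimately show ?thesis by (intro that) auto
qed

context
  fixes i k :: nat
  assumes i_class: "i \<in> {1..m}" and phase: "first_bin i \<le> k" "k < first_bin (i - 1)"
begin

lemma item_class_le_if_kb_rank_ge:
  assumes "x \<in> items" "k \<le> kb_rank x"
  shows "item_class x \<le> i"
proof (rule ccontr)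
  assume "\<not> item_class x \<le> i"
  then have "first_bin (item_class x - 1) \<le> first_bin i" by (intro first_bin_antimono) simp
  then show False using kb_rank_bounds(2)[OF assms(1)] assms(2) phase(1) by linarith
qed

lemma kb_bin_eq:
  defines "a \<equiv> (k - first_bin i) * batch i"
  shows "{x\<in>items. kb_rank x = k} = prod_encode ` ({i} \<times> {a..<a + batch i})"
proof (intro set_eqI iffI)
  fix x assume x: "x \<in> {x\<in>items. kb_rank x = k}"
  have "item_class x = i"
  proof (rule ccontr)
    assume "item_class x \<noteq> i"
    then have "first_bin (i - 1) \<le> first_bin (item_class x)"
      using item_class_le_if_kb_rank_ge[of x] x by (intro first_bin_antimono) auto
    then show False using kb_rank_bounds(1)[of x] x phase(2) by auto
  qed
  then have "item_index x div batch i = k - first_bin i" using x by (auto simp: kb_rank_def)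
  then have "item_index x \<in> {a..<a + batch i}"
    unfolding a_def by (metis atLeastLessThan_iff dividend_less_div_times
        div_times_less_eq_dividend batch_pos[of i] i_class atLeastAtMost_iff add.commute)
  then show "x \<in> prod_encode ` ({i} \<times> {a..<a + batch i})"
    using \<open>item_class x = i\<close>
    by (metis SigmaI item_class_def image_eqI item_index_def prod.collapse
        prod_decode_inverse singletonI)
next
  fix x assume "x \<in> prod_encode ` ({i} \<times> {a..<a + batch i})"
  then obtain j where x: "x = prod_encode (i, j)" and j: "a \<le> j" "j < a + batch i" by auto
  have b: "0 < batch i" using batch_pos i_class by simp
  have "j div batch i = k - first_bin i"
    using j b by (intro div_nat_eqI) (auto simp: a_def mult.commute)
  moreover have "a + batch i \<le> N i"
  proof -
    have "k - first_bin i < batches i" using phase first_bin_pred[OF i_class] by simp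
    then have "a + batch i \<le> batches i * batch i"
      unfolding a_def by (metis add.commute mult_Suc mult_le_mono1 Suc_leI)
    then show ?thesis using count_eq_batches_mult[OF i_class] by simp
  qed
  ultimately show "x \<in> {x\<in>items. kb_rank x = k}"
    using x j i_class phase(1) by (auto simp: mem_items_iff kb_rank_def)
qed

lemma kb_bin_size:
  "sum item_size {x\<in>items. kb_rank x = k} = real (batch i * scaled_size i) / real capacity"
proof -
  let ?S = "{i} \<times> {(k - first_bin i) * batch i..<(k - first_bin i) * batch i + batch i}"
  have "sum item_size {x\<in>items. kb_rank x = k} = (\<Sum>p\<in>?S. item_size (prod_encode p))"
    unfolding kb_bin_eq by (simp add: sum.reindex[OF inj_prod_encode])
  also have "\<dots> = (\<Sum>p\<in>?S. real (scaled_size i) / real capacity)"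
    by (rule sum.cong) (auto simp: item_size_def)
  finally show ?thesis by simp
qed

lemma kb_bin_nonempty: "{x\<in>items. kb_rank x = k} \<noteq> {}"
  using batch_pos i_class by (simp add: kb_bin_eq)

lemma kb_bin_maximal:
  assumes "B \<subseteq> {x\<in>items. k \<le> kb_rank x}" and "sum item_size B \<le> 1"
  shows "sum item_size B \<le> real (batch i * scaled_size i) / real capacity"
proof -
  define a where "a = (\<Sum>x\<in>B. scaled_size (item_class x))"
  have size_B: "sum item_size B = real a / real capacity"
    unfolding a_def by (rule sum_item_size)
  have "scaled_size i dvd a"
    unfolding a_def using assms(1) item_class_le_if_kb_rank_ge
    by (intro dvd_sum scaled_size_dvd_scaled_size) auto
  moreover have "a < scaled_size i * 2 ^ i"
  proof -
    have "a \<le> capacity" using assms(2) capacity_pos by (simp add: size_B divide_le_eq_1)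
    then show ?thesis using capacity_less_scaled_size_mult[of i] i_class by simp
  qed
  ultimately have "a \<le> batch i * scaled_size i"
    unfolding batch_def by (subst mult.commute) (rule le_mult_pred_if_dvd_less)
  then show ?thesis
    unfolding size_B by (simp add: divide_right_mono del: of_nat_mult)
qed

end

lemma KB_output_kb_bins: "KB_output items item_size item_size kb_bins"
  unfolding kb_bins_def
proof (rule KB_output_ranked_bins)
  show "\<forall>x\<in>items. kb_rank x < first_bin 0" using kb_rank_less by blast
next
  fix k assume "k < first_bin 0"
  then obtain i where "i \<in> {1..m}" "first_bin i \<le> k" "k < first_bin (i - 1)"
    by (rule kb_phase)
  note i = this
  have "real (batch i * scaled_size i) \<le> real capacity"
    using batch_mult_scaled_size_le_capacity[of i] i(1) by (simp only: of_nat_le_iff) simp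
  then show "{x\<in>items. kb_rank x = k} \<noteq> {} \<and> sum item_size {x\<in>items. kb_rank x = k} \<le> 1"
    using kb_bin_nonempty[OF i] kb_bin_size[OF i] capacity_pos
    by (simp add: divide_le_eq_1 del: of_nat_mult)
  fix B assume "B \<subseteq> {x\<in>items. k \<le> kb_rank x}" "sum item_size B \<le> 1"
  then show "sum item_size B \<le> sum item_size {x\<in>items. kb_rank x = k}"
    using kb_bin_maximal[OF i] kb_bin_size[OF i] by simp
qed

lemma item_index_less_width: "x \<in> items \<Longrightarrow> item_index x < Max (N ` {1..m})"
  by (auto simp: mem_items_iff intro: order_less_le_trans Max_ge)

lemma column_bin_nonempty:
  assumes "t < Max (N ` {1..m})"
  shows "{x\<in>items. item_index x = t} \<noteq> {}"
proof -
  have "Max (N ` {1..m}) \<in> N ` {1..m}"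
    using classes_nonempty by (intro Max_in) auto
  then obtain i where "i \<in> {1..m}" "N i = Max (N ` {1..m})" by auto
  then have "prod_encode (i, t) \<in> {x\<in>items. item_index x = t}"
    using assms by (simp add: mem_items_iff)
  then show ?thesis by blast
qed

lemma column_bin_size: "sum item_size {x\<in>items. item_index x = t} \<le> 1"
proof -
  let ?C = "{x\<in>items. item_index x = t}"
  have "inj_on item_class ?C"
    by (rule inj_onI) (metis (mono_tags, lifting) item_class_def mem_Collect_eq item_index_def
        prod.collapse prod_decode_inverse)
  then have "(\<Sum>x\<in>?C. scaled_size (item_class x)) = (\<Sum>c\<in>item_class ` ?C. scaled_size c)"
    by (simp add: sum.reindex)
  also have "\<dots> \<le> (\<Sum>c\<in>{1..m}. scaled_size c)"
    by (rule sum_mono2) (auto simp: mem_items_iff)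
  finally have "real (\<Sum>x\<in>?C. scaled_size (item_class x)) \<le> real capacity"
    by (simp only: capacity_eq_sum_scaled_size of_nat_le_iff)
  then show ?thesis
    using capacity_pos by (simp only: sum_item_size divide_le_eq_1) simp
qed

lemma feasible_column_bins: "feasible items item_size column_bins"
  unfolding column_bins_def
  using item_index_less_width column_bin_nonempty column_bin_size
  by (intro feasible_ranked_bins) auto

lemma cost_ranked_items:
  assumes "\<forall>x\<in>items. f x < L"
  shows "cost item_size (ranked_bins f items L) =
    real (\<Sum>i\<in>{1..m}. \<Sum>j<N i. (f (prod_encode (i, j)) + 1) * scaled_size i) / real capacity"
proof -
  have "cost item_size (ranked_bins f items L) = (\<Sum>x\<in>items. real (f x + 1) * item_size x)"
    by (rule cost_ranked_bins[OF items_finite assms])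
  also have "\<dots> = (\<Sum>x\<in>items. real ((f x + 1) * scaled_size (item_class x)) / real capacity)"
    by (simp add: item_size_def algebra_simps)
  also have "\<dots> = real (\<Sum>x\<in>items. (f x + 1) * scaled_size (item_class x)) / real capacity"
    by (simp only: sum_divide_distrib of_nat_sum)
  finally show ?thesis by (simp only: sum_items item_class_encode fst_conv)
qed

lemma cost_kb_bins:
  "cost item_size kb_bins = real (\<Sum>i\<in>{1..m}. scaled_size i *
     (N i * (first_bin i + 1) + batch i * (batches i * (batches i - 1) div 2))) / real capacity"
proof -
  have "(\<Sum>j<N i. (kb_rank (prod_encode (i, j)) + 1) * scaled_size i) =
      scaled_size i * (N i * (first_bin i + 1) + batch i * (batches i * (batches i - 1) div 2))"
    if "i \<in> {1..m}" for i
  proof -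
    have "(\<Sum>j<N i. (kb_rank (prod_encode (i, j)) + 1) * scaled_size i) =
        scaled_size i * (\<Sum>j<N i. (first_bin i + 1) + j div batch i)"
      by (simp add: kb_rank_def sum_distrib_left algebra_simps)
    also have "\<dots> = scaled_size i * (N i * (first_bin i + 1) + (\<Sum>j<N i. j div batch i))"
      unfolding sum.distrib by simp
    also have "(\<Sum>j<N i. j div batch i) = batch i * (batches i * (batches i - 1) div 2)"
      using count_eq_batches_mult[OF that] batch_pos[of i] that
      by (simp add: sum_div_upto_mult)
    finally show ?thesis .
  qed
  then show ?thesis
    unfolding kb_bins_def using kb_rank_less by (simp add: cost_ranked_items)
qed

lemma cost_column_bins:
  "cost item_size column_bins =
    real (\<Sum>i\<in>{1..m}. scaled_size i * (N i * (N i + 1) div 2)) / real capacity"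
proof -
  have "\<forall>x\<in>items. item_index x < Max (N ` {1..m})"
    using item_index_less_width by blast
  then show ?thesis
    unfolding column_bins_def
    by (simp only: cost_ranked_items item_index_encode snd_conv sum_Suc_mult_lessThan)
qed

end

lemma sum_atLeastAtMost_eq_sum_list: "sum f {a..b} = sum_list (map f [a..<Suc b])"
  by (metis atLeastLessThanSuc_atLeastAtMost set_upt sum_set_upt_conv_sum_list_nat)

lemma sum_greaterThanAtMost_eq_sum_list: "sum f {a<..b} = sum_list (map f [Suc a..<Suc b])"
  by (metis atLeastLessThanSuc_atLeastAtMost atLeastSucAtMost_greaterThanAtMost set_upt
      sum_set_upt_conv_sum_list_nat)

lemma ball_atLeastAtMost_eq_list_all: "(\<forall>i\<in>{a..b}. P i) \<longleftrightarrow> list_all P [a..<Suc b]"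
  by (auto simp: list_all_iff)

text \<open>Entry 0 is a placeholder; the classes are \<open>1..18\<close>.\<close>

definition hard_counts :: "nat \<Rightarrow> nat" where
  "hard_counts i = [0, 1611020, 1236387, 1088276, 1021800, 990233, 974862, 967232, 963390,
     961191, 960597, 960043, 958230, 958347, 950214, 950243, 917490, 917497, 786429] ! i"

lemma geometric_classes_hard_counts: "geometric_classes 18 hard_counts"
proof
  have "\<forall>i\<in>{1..18}. 2 ^ i - 1 dvd hard_counts i"
    by (simp only: ball_atLeastAtMost_eq_list_all) (simp add: upt_rec hard_counts_def)
  then show "\<And>i. i \<in> {1..18} \<Longrightarrow> 2 ^ i - 1 dvd hard_counts i" by blast
qed simp

interpretation hard: geometric_classes 18 hard_counts
  by (rule geometric_classes_hard_counts)

lemma hard_cost_kb_bins: "cost hard.item_size hard.kb_bins = 733943509150007224 / 524286"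
  unfolding hard.cost_kb_bins
  by (simp add: sum_atLeastAtMost_eq_sum_list sum_greaterThanAtMost_eq_sum_list upt_rec
      hard_counts_def hard.scaled_size_def hard.batch_def hard.batches_def hard.first_bin_def
      hard.capacity_def)

lemma hard_cost_column_bins: "cost hard.item_size hard.column_bins = 512013762924028466 / 524286"
  unfolding hard.cost_column_bins
  by (simp add: sum_atLeastAtMost_eq_sum_list upt_rec hard_counts_def hard.scaled_size_def
      hard.capacity_def)

theorem proposition3:
  shows "\<exists>(I :: nat set) (s :: nat \<Rightarrow> real) (w :: nat \<Rightarrow> real) (Bs :: nat set list).
           mwsbp_instance I s w \<and> (\<forall>i\<in>I. w i = s i) \<and>
           KB_output I s w Bs \<and> cost w Bs > 1.4334 * OPT I s w"
proof -
  have "\<forall>x\<in>hard.items. 0 \<le> hard.item_size x"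
    using hard.mwsbp_instance by (simp add: mwsbp_instance_def less_imp_le)
  then have "1.4334 * OPT hard.items hard.item_size hard.item_size
      \<le> 1.4334 * cost hard.item_size hard.column_bins"
    using OPT_le_cost hard.feasible_column_bins by simp
  also have "\<dots> < cost hard.item_size hard.kb_bins"
    by (simp add: hard_cost_kb_bins hard_cost_column_bins)
  finally show ?thesis
    using hard.mwsbp_instance hard.KB_output_kb_bins by blast
qed

end
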